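(* Let $V$ be a real vector space with an inner product of signature $(p,q)$ where $p\ge3$ and $q\ge3$. (1) There exists an algebraic curvature tensor $R$ on $V$ which is IP, but which is not spacelike Jordan IP, not timelike Jordan IP, and not mixed Jordan IP. (2) If $p=q$, then there exists an algebraic curvature tensor $R$ on $V$ which is spacelike Jordan IP and timelike Jordan IP but not mixed Jordan IP. (3) If $p>q$, then there exists an algebraic curvature tensor $R$ on $V$ which is spacelike Jordan IP, not timelike Jordan IP, and not mixed Jordan IP.
   Context: An inner product of signature $(p,q)$ is a non-degenerate symmetric bilinear form $(\cdot,\cdot)$ whose maximal negative definite subspaces have dimension $p$ and maximal positive definite subspaces dimension $q$. A $2$-plane $\pi$ is spacelike (resp. timelike, mixed) if the induced form on $\pi$ has signature $(0,2)$ (resp. $(2,0)$, $(1,1)$). An algebraic curvature tensor is $R\in\otimes^4V^*$ with $R(x,y,z,w)=R(z,w,x,y)=-R(y,x,z,w)$ and $R(x,y,z,w)+R(y,z,x,w)+R(z,x,y,w)=0$; the operator $R(x,y)$ is defined by $R(x,y,z,w)=(R(x,y)z,w)$. For a non-degenerate oriented $2$-plane $\pi$ with oriented basis $\{e_1,e_2\}$, $R(\pi):=|(e_1,e_1)(e_2,e_2)-(e_1,e_2)^2|^{-1/2}R(e_1,e_2)$. $R$ is IP if the eigenvalues (counted with multiplicity) of $R(\pi)$ are the same for any two oriented spacelike $2$-planes $\pi$. $R$ is spacelike Jordan IP if for any two oriented spacelike $2$-planes $\pi,\pi'$ the linear maps $R(\pi)$ and $R(\pi')$ are conjugate (have the same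 real Jordan normal form); timelike and mixed Jordan IP are defined analogously using timelike, resp. mixed, $2$-planes. *)

theory Defs
  imports "HOL-Analysis.Analysis" "HOL-Computational_Algebra.Polynomial"
begin

type_synonym ('n) form = "real^('n::finite) \<Rightarrow> real^'n \<Rightarrow> real"

definition neg_def_on :: "('n::finite) form \<Rightarrow> (real^'n) set \<Rightarrow> bool" where
  "neg_def_on g U \<longleftrightarrow> (\<forall>x\<in>U. x \<noteq> 0 \<longrightarrow> g x x < 0)"

definition pos_def_on :: "('n::finite) form \<Rightarrow> (real^'n) set \<Rightarrow> bool" where
  "pos_def_on g U \<longleftrightarrow> (\<forall>x\<in>U. x \<noteq> 0 \<longrightarrow> g x x > 0)"

definition nondeg_on :: "('n::finite) form \<Rightarrow> (real^'n) set \<Rightarrow> bool" where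
  "nondeg_on g W \<longleftrightarrow> (\<forall>x\<in>W. (\<forall>y\<in>W. g x y = 0) \<longrightarrow> x = 0)"

definition has_signature :: "('n::finite) form \<Rightarrow> (real^'n) set \<Rightarrow> nat \<Rightarrow> nat \<Rightarrow> bool" where
  "has_signature g W p q \<longleftrightarrow> subspace W \<and> nondeg_on g W \<and>
     (\<exists>U. subspace U \<and> U \<subseteq> W \<and> neg_def_on g U \<and> dim U = p) \<and>
     (\<forall>U. subspace U \<and> U \<subseteq> W \<and> neg_def_on g U \<longrightarrow> dim U \<le> p) \<and>
     (\<exists>U. subspace U \<and> U \<subseteq> W \<and> pos_def_on g U \<and> dim U = q) \<and>
     (\<forall>U. subspace U \<and> U \<subseteq> W \<and> pos_def_on g U \<longrightarrow> dim U \<le> q)"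

definition inner_product_sig :: "('n::finite) form \<Rightarrow> nat \<Rightarrow> nat \<Rightarrow> bool" where
  "inner_product_sig g p q \<longleftrightarrow> bilinear g \<and> (\<forall>x y. g x y = g y x) \<and> has_signature g UNIV p q"

definition alg_curv_tensor ::
  "(real^('n::finite) \<Rightarrow> real^'n \<Rightarrow> real^'n \<Rightarrow> real^'n \<Rightarrow> real) \<Rightarrow> bool" where
  "alg_curv_tensor R \<longleftrightarrow>
     (\<forall>y z w. linear (\<lambda>x. R x y z w)) \<and> (\<forall>x z w. linear (\<lambda>y. R x y z w)) \<and>
     (\<forall>x y w. linear (\<lambda>z. R x y z w)) \<and> (\<forall>x y z. linear (\<lambda>w. R x y z w)) \<and>
     (\<forall>x y z w. R x y z w = R z w x y) \<and>
     (\<forall>x y z w. R x y z w = - R y x z w) \<and>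
     (\<forall>x y z w. R x y z w + R y z x w + R z x y w = 0)"

definition curv_op :: "('n::finite) form \<Rightarrow> (real^('n::finite) \<Rightarrow> real^'n \<Rightarrow> real^'n \<Rightarrow> real^'n \<Rightarrow> real)
    \<Rightarrow> real^'n \<Rightarrow> real^'n \<Rightarrow> (real^'n \<Rightarrow> real^'n)" where
  "curv_op g R x y = (THE f. linear f \<and> (\<forall>z w. g (f z) w = R x y z w))"

definition plane_op :: "('n::finite) form \<Rightarrow> (real^('n::finite) \<Rightarrow> real^'n \<Rightarrow> real^'n \<Rightarrow> real^'n \<Rightarrow> real)
    \<Rightarrow> real^'n \<Rightarrow> real^'n \<Rightarrow> (real^'n \<Rightarrow> real^'n)" where
  "plane_op g R e1 e2 = (\<lambda>z. (\<bar>g e1 e1 * g e2 e2 - (g e1 e2)^2\<bar> powr (-1/2)) *\<^sub>R curv_op g R e1 e2 z)"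

definition plane_of_sig :: "('n::finite) form \<Rightarrow> nat \<Rightarrow> nat \<Rightarrow> real^'n \<Rightarrow> real^'n \<Rightarrow> bool" where
  "plane_of_sig g a b e1 e2 \<longleftrightarrow>
     (\<forall>s t. s *\<^sub>R e1 + t *\<^sub>R e2 = 0 \<longrightarrow> s = 0 \<and> t = 0) \<and>
     has_signature g (span {e1, e2}) a b"

definition char_poly_map :: "(real^('n::finite) \<Rightarrow> real^'n) \<Rightarrow> complex poly" where
  "char_poly_map f = det (\<chi> i j. (if i = j then [:0, 1:] else 0) - [: complex_of_real (matrix f $ i $ j) :])"

definition same_eigenvalues :: "(real^('n::finite) \<Rightarrow> real^'n) \<Rightarrow> (real^'n \<Rightarrow> real^'n) \<Rightarrow> bool" where
  "same_eigenvalues f h \<longleftrightarrow> (\<forall>c::complex. order c (char_poly_map f) = order c (char_poly_map h))"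

definition conjugate_maps :: "(real^('n::finite) \<Rightarrow> real^'n) \<Rightarrow> (real^'n \<Rightarrow> real^'n) \<Rightarrow> bool" where
  "conjugate_maps f h \<longleftrightarrow> (\<exists>T. linear T \<and> bij T \<and> T \<circ> f = h \<circ> T)"

definition IP :: "('n::finite) form \<Rightarrow> (real^('n::finite) \<Rightarrow> real^'n \<Rightarrow> real^'n \<Rightarrow> real^'n \<Rightarrow> real) \<Rightarrow> bool" where
  "IP g R \<longleftrightarrow> (\<forall>e1 e2 f1 f2. plane_of_sig g 0 2 e1 e2 \<and> plane_of_sig g 0 2 f1 f2 \<longrightarrow>
      same_eigenvalues (plane_op g R e1 e2) (plane_op g R f1 f2))"

definition jordan_IP_sig :: "nat \<Rightarrow> nat \<Rightarrow> ('n::finite) form \<Rightarrow> (real^('n::finite) \<Rightarrow> real^'n \<Rightarrow> real^'n \<Rightarrow> real^'n \<Rightarrow> real) \<Rightarrow> bool" where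
  "jordan_IP_sig a b g R \<longleftrightarrow> (\<forall>e1 e2 f1 f2. plane_of_sig g a b e1 e2 \<and> plane_of_sig g a b f1 f2 \<longrightarrow>
      conjugate_maps (plane_op g R e1 e2) (plane_op g R f1 f2))"

abbreviation "spacelike_jordan_IP \<equiv> jordan_IP_sig 0 2"
abbreviation "timelike_jordan_IP \<equiv> jordan_IP_sig 2 0"
abbreviation "mixed_jordan_IP \<equiv> jordan_IP_sig 1 1"

end

(*
  Take a frame u 0, ..., u (p-1) (timelike) and v 0, ..., v (q-1) (spacelike), orthonormal for g.
  The vectors n i = u i + v i are null and mutually orthogonal, so for m \<le> min p q the operator
  \<phi> x = (\<Sum>i<m. g x (n i) n i) is self-adjoint with totally isotropic image. The curvature
  tensor R(x,y,z,w) = B(y,z) B(x,w) - B(x,z) B(y,w) of B(x,y) = g (\<phi> x) y has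
  R(\<pi>) = c (\<phi> e1 \<and> \<phi> e2), a map of square zero; hence every R(\<pi>) has characteristic
  polynomial X^n and R is IP. Moreover R(\<pi>) vanishes when \<phi> is not injective on \<pi> and
  otherwise has rank two, and square-zero maps of equal rank are conjugate.

  For m = 2 planes of each type are killed by \<phi> (span {v 0, v 2}, span {u 0, u 2},
  span {u 0, v 0}) while others are not. For m = q \<le> p the kernel of \<phi> is negative
  semidefinite: corrected by null vectors, its elements become orthogonal to the v j, which span
  a maximal positive definite subspace. So \<phi> is injective on spacelike planes, and
  symmetrically on timelike planes when p = q, while span {u 0, v 0} is always killed.
*)
theory Submission
  imports Defs
begin

section \<open>Square-zero linear maps\<close>

lemma det_degree_le:
  fixes M :: "'a::comm_ring_1 poly^'n^'n"
  assumes "\<And>i j. degree (M $ i $ j) \<le> 1"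
  shows "degree (det M) \<le> CARD('n)"
  unfolding det_def
proof (rule degree_sum_le)
  fix p assume "p \<in> {p. p permutes (UNIV::'n set)}"
  have "degree (\<Prod>i\<in>UNIV. M $ i $ p i) \<le> (\<Sum>i\<in>UNIV. degree (M $ i $ p i))"
    using degree_prod_sum_le[of UNIV "\<lambda>i. M $ i $ p i"] by (simp add: o_def)
  also have "\<dots> \<le> CARD('n)"
    using sum_mono[of UNIV "\<lambda>i. degree (M $ i $ p i)" "\<lambda>_. 1"] assms by simp
  finally have "degree (\<Prod>i\<in>UNIV. M $ i $ p i) \<le> CARD('n)" .
  moreover have "degree (of_int (sign p) * (\<Prod>i\<in>UNIV. M $ i $ p i))
      \<le> degree (of_int (sign p) :: 'a poly) + degree (\<Prod>i\<in>UNIV. M $ i $ p i)"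
    by (rule degree_mult_le)
  ultimately show "degree (of_int (sign p) * (\<Prod>i\<in>UNIV. M $ i $ p i)) \<le> CARD('n)"
    by (simp add: degree_of_int)
qed simp

lemma mat_diff_mult_mat_add:
  fixes C :: "'a::comm_ring_1^'n^'n"
  assumes CC: "C ** C = 0"
  shows "(mat x - C) ** (mat x + C) = mat (x * x)"
proof -
  have delta: "(if P then a else 0) * b = (if P then a * b else 0)"
    "b * (if P then a else 0) = (if P then b * a else 0)" for P and a b :: 'a
    by simp_all
  have "((mat x - C) ** (mat x + C)) $ i $ j = (mat (x * x) :: 'a^'n^'n) $ i $ j" for i j
  proof -
    have "((mat x - C) ** (mat x + C)) $ i $ j
        = (\<Sum>k\<in>UNIV. (if i = k then x else 0) * (if k = j then x else 0)
            + ((if i = k then x else 0) * C $ k $ j - C $ i $ k * (if k = j then x else 0))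
            - C $ i $ k * C $ k $ j)"
      unfolding matrix_matrix_mult_def by (simp, rule sum.cong) (auto simp: mat_def algebra_simps)
    also have "\<dots> = (\<Sum>k\<in>UNIV. (if i = k then x else 0) * (if k = j then x else 0))
        + ((\<Sum>k\<in>UNIV. (if i = k then x else 0) * C $ k $ j)
           - (\<Sum>k\<in>UNIV. C $ i $ k * (if k = j then x else 0)))
        - (C ** C) $ i $ j"
      by (simp add: sum.distrib sum_subtractf matrix_matrix_mult_def)
    also have "\<dots> = (if i = j then x * x else 0)"
      using CC by (simp add: delta mult.commute)
    finally show ?thesis by (simp add: mat_def)
  qed
  then show ?thesis by (simp add: vec_eq_iff)
qed

text \<open>With C the matrix of f, (X I - C)(X I + C) = X^2 I, so the characteristic polynomial
  times det (X I + C) is X^(2n), and both factors have degree at most n.\<close>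
lemma char_poly_map_square_zero:
  fixes f :: "real^'n \<Rightarrow> real^'n"
  assumes lin: "linear f" and sq: "\<And>x. f (f x) = 0"
  shows "order c (char_poly_map f) = (if c = 0 then CARD('n) else 0)"
proof -
  define C :: "complex poly^'n^'n" where "C = (\<chi> i j. [: complex_of_real (matrix f $ i $ j) :])"
  have "matrix f ** matrix f = matrix (f \<circ> f)" using matrix_compose[OF lin lin] by simp
  also have "f \<circ> f = (\<lambda>x. 0)" using sq by auto
  finally have "matrix f ** matrix f = 0" by (simp add: matrix_def vec_eq_iff)
  then have CC: "C ** C = 0"
    by (simp add: C_def matrix_matrix_mult_def vec_eq_iff mult_to_poly sum_to_poly mult.commute
        flip: of_real_mult of_real_sum)
  define X :: "complex poly" where "X = [:0, 1:]"
  define P where "P = det (mat X - C)"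
  define Q where "Q = det (mat X + C)"
  have char: "char_poly_map f = P"
    unfolding char_poly_map_def P_def C_def X_def mat_def
    by (rule arg_cong[where f = det]) (simp add: vec_eq_iff)
  have PQ: "P * Q = X ^ (2 * CARD('n))"
  proof -
    have "P * Q = det (mat (X * X) :: complex poly^'n^'n)"
      unfolding P_def Q_def by (simp add: det_mul[symmetric] mat_diff_mult_mat_add[OF CC])
    also have "\<dots> = (X * X) ^ CARD('n)" by (subst det_diagonal) (auto simp: mat_def)
    finally show ?thesis by (simp add: power_mult power2_eq_square[symmetric])
  qed
  then have nz: "P \<noteq> 0" "Q \<noteq> 0" by (auto simp: X_def)
  have deg: "degree P \<le> CARD('n)" "degree Q \<le> CARD('n)"
    unfolding P_def Q_def
    by (rule det_degree_le, simp add: X_def C_def mat_def degree_diff_le degree_add_le)+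
  show ?thesis
  proof (cases "c = 0")
    case True
    have "order 0 (P * Q) = 2 * CARD('n)"
      using PQ order_power_n_n[of 0 "2 * CARD('n)"] by (simp add: X_def)
    then have "order 0 P + order 0 Q = 2 * CARD('n)" using order_mult[of P Q 0] nz by simp
    moreover have "order 0 P \<le> CARD('n)" "order 0 Q \<le> CARD('n)"
      using order_degree nz deg le_trans by blast+
    ultimately show ?thesis using True char by simp
  next
    case False
    have "poly P c * poly Q c = c ^ (2 * CARD('n))"
      using arg_cong[OF PQ, of "\<lambda>r. poly r c"] by (simp add: X_def)
    then have "poly P c \<noteq> 0" using False by auto
    then show ?thesis using False char order_root[of P c] by auto
  qed
qed

lemma preimages_inj_on_disjoint_kernel:
  assumes "\<forall>b\<in>B. f (s b) = b" "\<forall>k\<in>K. f k = 0" "0 \<notin> B"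
  shows "inj_on s B" "s ` B \<inter> K = {}"
  using assms by (metis inj_onI, force)

lemma independent_preimages_Un_kernel:
  fixes f :: "'a::euclidean_space \<Rightarrow> 'b::euclidean_space"
  assumes lin: "linear f" and B: "independent B" "\<forall>b\<in>B. f (s b) = b"
    and K: "independent K" "\<forall>k\<in>K. f k = 0"
  shows "independent (s ` B \<union> K)"
proof (rule independent_if_scalars_zero)
  have inj: "inj_on s B" and disj: "s ` B \<inter> K = {}"
    using preimages_inj_on_disjoint_kernel[OF B(2) K(2)] B(1) dependent_zero by auto
  have fin: "finite B" "finite K" using B(1) K(1) by (simp_all add: finiteI_independent)
  then show "finite (s ` B \<union> K)" by simp
  fix c x assume sum0: "(\<Sum>x\<in>s ` B \<union> K. c x *\<^sub>R x) = 0" and x: "x \<in> s ` B \<union> K"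
  have split: "(\<Sum>x\<in>s ` B. c x *\<^sub>R x) + (\<Sum>x\<in>K. c x *\<^sub>R x) = 0"
    using sum0 disj fin by (simp add: sum.union_disjoint)
  have "f (\<Sum>x\<in>s ` B. c x *\<^sub>R x) + f (\<Sum>x\<in>K. c x *\<^sub>R x) = 0"
    using split linear_add[OF lin] linear_0[OF lin] by metis
  moreover have "f (\<Sum>x\<in>K. c x *\<^sub>R x) = 0"
    using K(2) by (simp add: linear_sum[OF lin] linear_scale[OF lin])
  moreover have "f (\<Sum>x\<in>s ` B. c x *\<^sub>R x) = (\<Sum>b\<in>B. c (s b) *\<^sub>R b)"
    using inj B(2) by (simp add: linear_sum[OF lin] linear_scale[OF lin] sum.reindex)
  ultimately have "(\<Sum>b\<in>B. c (s b) *\<^sub>R b) = 0" by simp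
  then have cB: "\<forall>b\<in>B. c (s b) = 0" using B(1) by (auto simp: independent_explicit)
  then have "(\<Sum>x\<in>K. c x *\<^sub>R x) = 0" using split by (simp add: sum.reindex[OF inj])
  then have "\<forall>k\<in>K. c k = 0" using K(1) by (auto simp: independent_explicit)
  then show "c x = 0" using x cB by blast
qed

lemma span_preimages_Un_kernel:
  fixes f :: "'a::euclidean_space \<Rightarrow> 'b::euclidean_space"
  assumes lin: "linear f" and B: "finite B" "range f \<subseteq> span B" "\<forall>b\<in>B. f (s b) = b"
    and K: "{x. f x = 0} \<subseteq> span K"
  shows "span (s ` B \<union> K) = UNIV"
proof -
  have "x \<in> span (s ` B \<union> K)" for x
  proof -
    obtain c where c: "f x = (\<Sum>b\<in>B. c b *\<^sub>R b)"
      using B(1,2) by (force simp: span_finite)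
    have "f (x - (\<Sum>b\<in>B. c b *\<^sub>R s b)) = 0"
      using c B(3) by (simp add: linear_diff[OF lin] linear_sum[OF lin] linear_scale[OF lin])
    then have "x - (\<Sum>b\<in>B. c b *\<^sub>R s b) \<in> span (s ` B \<union> K)"
      using K span_mono[of K "s ` B \<union> K"] by auto
    moreover have "(\<Sum>b\<in>B. c b *\<^sub>R s b) \<in> span (s ` B \<union> K)"
      by (intro span_sum span_scale span_base) auto
    ultimately show ?thesis using span_add by fastforce
  qed
  then show ?thesis by auto
qed

lemma square_zero_adapted_basis:
  fixes f :: "real^'n \<Rightarrow> real^'n"
  assumes lin: "linear f" and sq: "\<And>x. f (f x) = 0"
  obtains B s K where "independent B" "card B = dim (range f)" "\<forall>b\<in>B. f (s b) = b"
    "B \<subseteq> K" "\<forall>k\<in>K. f k = 0" "s ` B \<inter> K = {}" "inj_on s B"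
    "independent (s ` B \<union> K)" "span (s ` B \<union> K) = UNIV" "card B + card K = CARD('n)"
proof -
  obtain B where B: "B \<subseteq> range f" "independent B" "range f \<subseteq> span B" "card B = dim (range f)"
    using basis_exists by blast
  have "subspace {x. f x = 0}" using lin by (rule linear_subspace_kernel)
  moreover have "B \<subseteq> {x. f x = 0}" using B(1) sq by auto
  ultimately obtain K where K: "B \<subseteq> K" "K \<subseteq> {x. f x = 0}" "independent K" "{x. f x = 0} \<subseteq> span K"
    using maximal_independent_subset_extend B(2) by metis
  define s where "s b = (SOME x. f x = b)" for b
  have fs: "\<forall>b\<in>B. f (s b) = b"
    using B(1) unfolding s_def by (metis (mono_tags) imageE someI subsetD)
  have fK: "\<forall>k\<in>K. f k = 0" using K(2) by auto
  have inj: "inj_on s B" and disj: "s ` B \<inter> K = {}"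
    using preimages_inj_on_disjoint_kernel[OF fs fK] B(2) dependent_zero by auto
  have indep: "independent (s ` B \<union> K)"
    using independent_preimages_Un_kernel[OF lin B(2) fs K(3) fK] .
  have span: "span (s ` B \<union> K) = UNIV"
    using span_preimages_Un_kernel[OF lin _ B(3) fs K(4)] B(2) finiteI_independent by blast
  have "card (s ` B \<union> K) = dim (UNIV :: (real^'n) set)"
    using dim_eq_card_independent[OF indep] span by (metis dim_span)
  moreover have "finite B" "finite K" using B(2) K(3) by (simp_all add: finiteI_independent)
  ultimately have "card B + card K = CARD('n)"
    using disj card_image[OF inj] by (simp add: card_Un_disjoint)
  then show thesis using that B(2,4) fs K(1) fK disj inj indep span by blast
qed

lemma conjugate_mapsI:
  fixes f h T :: "real^'n \<Rightarrow> real^'n"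
  assumes "linear f" "linear h" "linear T" "span A = UNIV" "span (T ` A) = UNIV"
    and "\<And>x. x \<in> A \<Longrightarrow> T (f x) = h (T x)"
  shows "conjugate_maps f h"
proof -
  have "T \<circ> f = h \<circ> T"
    using linear_eq_on_span[of "T \<circ> f" "h \<circ> T" A] assms(4,6)
      linear_compose[OF assms(1,3)] linear_compose[OF assms(3,2)]
    by (auto simp: fun_eq_iff)
  moreover have "surj T" using span_linear_image[OF assms(3), of A] assms(4,5) by simp
  then have "bij T" using linear_surjective_imp_injective[OF assms(3)] by (simp add: bij_def)
  ultimately show ?thesis unfolding conjugate_maps_def using assms(3) by blast
qed

lemma square_zero_conjugate:
  fixes f h :: "real^'n \<Rightarrow> real^'n"
  assumes "linear f" "\<And>x. f (f x) = 0" "linear h" "\<And>x. h (h x) = 0"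
    and rank: "dim (range f) = dim (range h)"
  shows "conjugate_maps f h"
proof -
  obtain B s K where B: "independent B" "card B = dim (range f)" "\<forall>b\<in>B. f (s b) = b"
    "B \<subseteq> K" "\<forall>k\<in>K. f k = 0" "s ` B \<inter> K = {}" "inj_on s B"
    "independent (s ` B \<union> K)" "span (s ` B \<union> K) = UNIV" "card B + card K = CARD('n)"
    by (rule square_zero_adapted_basis[OF assms(1,2)])
  obtain B' s' K' where B': "independent B'" "card B' = dim (range h)" "\<forall>b\<in>B'. h (s' b) = b"
    "B' \<subseteq> K'" "\<forall>k\<in>K'. h k = 0" "s' ` B' \<inter> K' = {}" "inj_on s' B'"
    "independent (s' ` B' \<union> K')" "span (s' ` B' \<union> K') = UNIV" "card B' + card K' = CARD('n)"
    by (rule square_zero_adapted_basis[OF assms(3,4)])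
  have fin: "finite B" "finite K" "finite B'" "finite K'"
    using B(1,8) B'(1,8) finiteI_independent by auto
  obtain \<sigma> where \<sigma>: "bij_betw \<sigma> B B'"
    using finite_same_card_bij[OF fin(1,3)] B(2) B'(2) rank by auto
  have "card (K - B) = card (K' - B')"
    using card_Diff_subset[OF fin(1) B(4)] card_Diff_subset[OF fin(3) B'(4)] B(2,10) B'(2,10) rank
    by simp
  then obtain \<rho> where \<rho>: "bij_betw \<rho> (K - B) (K' - B')"
    using finite_same_card_bij[of "K - B" "K' - B'"] fin by auto
  define \<tau> where "\<tau> x = (if x \<in> s ` B then s' (\<sigma> (f x)) else if x \<in> B then \<sigma> x else \<rho> x)" for x
  obtain T where T: "linear T" "\<forall>x\<in>s ` B \<union> K. T x = \<tau> x"
    using linear_independent_extend[OF B(8), of \<tau>] by blast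
  have TsB: "T (s b) = s' (\<sigma> b)" if "b \<in> B" for b
    using that B(3) T(2) by (simp add: \<tau>_def)
  have TB: "T b = \<sigma> b" if "b \<in> B" for b
  proof -
    have "b \<in> K" "b \<notin> s ` B" using that B(4,6) by auto
    then show ?thesis using that T(2) by (simp add: \<tau>_def)
  qed
  have TK: "T k = \<rho> k" if "k \<in> K - B" for k
    using that B(6) T(2) by (auto simp: \<tau>_def)
  have "T ` s ` B = s' ` \<sigma> ` B"
    using TsB by (simp add: image_image cong: image_cong)
  then have image_sB: "T ` s ` B = s' ` B'"
    using bij_betw_imp_surj_on[OF \<sigma>] by simp
  have image_B: "T ` B = B'"
    using TB bij_betw_imp_surj_on[OF \<sigma>] by (simp cong: image_cong)
  have "T ` (K - B) = \<rho> ` (K - B)" using TK by (rule image_cong[OF refl])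
  then have image_K: "T ` (K - B) = K' - B'" using bij_betw_imp_surj_on[OF \<rho>] by simp
  have "T ` K = K'"
    using image_B image_K B(4) B'(4) by (metis Diff_partition image_Un)
  show ?thesis
  proof (rule conjugate_mapsI[OF assms(1,3) T(1) B(9)])
    show "span (T ` (s ` B \<union> K)) = UNIV"
      using B'(9) image_sB \<open>T ` K = K'\<close> by (simp add: image_Un)
    fix x assume x: "x \<in> s ` B \<union> K"
    show "T (f x) = h (T x)"
    proof (cases "x \<in> s ` B")
      case True
      then obtain b where b: "b \<in> B" "x = s b" by blast
      have "\<sigma> b \<in> B'" using \<sigma> b(1) by (rule bij_betw_apply)
      then show ?thesis using b TsB TB B(3) B'(3) by simp
    next
      case False
      then have "x \<in> K" using x by blast
      then show ?thesis using B(5) B'(5) \<open>T ` K = K'\<close> linear_0[OF T(1)] by auto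
    qed
  qed
qed

section \<open>Symmetric bilinear forms of given signature\<close>

definition sym_bilinear :: "('n::finite) form \<Rightarrow> bool" where
  "sym_bilinear g \<longleftrightarrow> bilinear g \<and> (\<forall>x y. g x y = g y x)"

definition nondegenerate :: "('n::finite) form \<Rightarrow> bool" where
  "nondegenerate g \<longleftrightarrow> (\<forall>x. (\<forall>y. g x y = 0) \<longrightarrow> x = 0)"

lemma sym_bilinear_linear_left: "sym_bilinear g \<Longrightarrow> linear (\<lambda>x. g x z)"
  unfolding sym_bilinear_def bilinear_def by auto

lemma sym_bilinear_linear_right: "sym_bilinear g \<Longrightarrow> linear (g z)"
  unfolding sym_bilinear_def bilinear_def by auto

lemma sym_bilinear_commute: "sym_bilinear g \<Longrightarrow> g x y = g y x"
  unfolding sym_bilinear_def by auto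

lemma sym_bilinear_simps:
  assumes "sym_bilinear g"
  shows "g (x + y) z = g x z + g y z" "g z (x + y) = g z x + g z y"
    "g (x - y) z = g x z - g y z" "g z (x - y) = g z x - g z y"
    "g (c *\<^sub>R x) z = c * g x z" "g z (c *\<^sub>R x) = c * g z x"
    "g 0 z = 0" "g z 0 = 0" "g (- x) z = - g x z" "g z (- x) = - g z x"
    "g (sum f S) z = (\<Sum>i\<in>S. g (f i) z)" "g z (sum f S) = (\<Sum>i\<in>S. g z (f i))"
  using linear_add[OF sym_bilinear_linear_left[OF assms]]
    linear_add[OF sym_bilinear_linear_right[OF assms]]
    linear_diff[OF sym_bilinear_linear_left[OF assms]]
    linear_diff[OF sym_bilinear_linear_right[OF assms]]
    linear_scale[OF sym_bilinear_linear_left[OF assms]]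
    linear_scale[OF sym_bilinear_linear_right[OF assms]]
    linear_0[OF sym_bilinear_linear_left[OF assms]]
    linear_0[OF sym_bilinear_linear_right[OF assms]]
    linear_neg[OF sym_bilinear_linear_left[OF assms]]
    linear_neg[OF sym_bilinear_linear_right[OF assms]]
    linear_sum[OF sym_bilinear_linear_left[OF assms]]
    linear_sum[OF sym_bilinear_linear_right[OF assms]]
  by auto

lemma sym_bilinear_neg: "sym_bilinear g \<Longrightarrow> sym_bilinear (\<lambda>x y. - g x y)"
  unfolding sym_bilinear_def bilinear_def by (auto intro: linear_compose_neg)

lemma inner_product_sig_sym_bilinear: "inner_product_sig g p q \<Longrightarrow> sym_bilinear g"
  unfolding inner_product_sig_def sym_bilinear_def by auto

lemma inner_product_sig_nondegenerate: "inner_product_sig g p q \<Longrightarrow> nondegenerate g"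
  unfolding inner_product_sig_def has_signature_def nondeg_on_def nondegenerate_def by auto

lemma has_signature_neg: "has_signature (\<lambda>x y. - g x y) W a b \<longleftrightarrow> has_signature g W b a"
  unfolding has_signature_def neg_def_on_def pos_def_on_def nondeg_on_def by auto

lemma inner_product_sig_neg: "inner_product_sig g p q \<Longrightarrow> inner_product_sig (\<lambda>x y. - g x y) q p"
  using sym_bilinear_neg[of g] inner_product_sig_sym_bilinear[of g p q]
  unfolding inner_product_sig_def has_signature_neg sym_bilinear_def by auto

lemma neg_def_on_iff_pos_def_on_neg: "neg_def_on g U \<longleftrightarrow> pos_def_on (\<lambda>x y. - g x y) U"
  unfolding neg_def_on_def pos_def_on_def by auto

lemma pos_def_has_signature:
  assumes "subspace W" "pos_def_on g W"
  shows "has_signature g W 0 (dim W)"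
proof -
  have "U \<subseteq> {0}" if "U \<subseteq> W" "neg_def_on g U" for U
    using that assms(2) unfolding neg_def_on_def pos_def_on_def by force
  then have "dim U = 0" if "U \<subseteq> W" "neg_def_on g U" for U
    using that dim_eq_0 by blast
  moreover have "nondeg_on g W"
    using assms(2) unfolding nondeg_on_def pos_def_on_def by force
  moreover have "subspace {0}" "neg_def_on g {0}" "dim {0::real^'n} = 0"
    by (auto simp: subspace_def neg_def_on_def dim_eq_0)
  ultimately show ?thesis
    unfolding has_signature_def using assms subspace_0 dim_subset by blast
qed

lemma span_image_lessThan_sum:
  fixes w :: "nat \<Rightarrow> 'a::real_vector"
  assumes "y \<in> span (w ` {..<k})"
  obtains c where "y = (\<Sum>i<k. c i *\<^sub>R w i)"
  using assms
proof (induction k arbitrary: y thesis)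
  case 0
  then show ?case by simp
next
  case (Suc k)
  have "w ` {..<Suc k} = insert (w k) (w ` {..<k})" by (simp add: lessThan_Suc)
  then obtain t where "y - t *\<^sub>R w k \<in> span (w ` {..<k})"
    using Suc.prems(2) span_breakdown_eq by metis
  then obtain c where c: "y - t *\<^sub>R w k = (\<Sum>i<k. c i *\<^sub>R w i)" using Suc.IH by blast
  have "(\<Sum>i<Suc k. (c(k := t)) i *\<^sub>R w i) = (\<Sum>i<k. c i *\<^sub>R w i) + t *\<^sub>R w k"
    by simp
  then have "y = (\<Sum>i<Suc k. (c(k := t)) i *\<^sub>R w i)"
    using c by (metis diff_add_cancel)
  then show ?case by (rule Suc.prems(1))
qed

definition orthogonal_family :: "('n::finite) form \<Rightarrow> (nat \<Rightarrow> real^'n) \<Rightarrow> nat \<Rightarrow> bool" where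
  "orthogonal_family g w k \<longleftrightarrow> (\<forall>i<k. \<forall>j<k. i \<noteq> j \<longrightarrow> g (w i) (w j) = 0)"

lemma orthogonal_family_neg: "orthogonal_family (\<lambda>x y. - g x y) w k \<longleftrightarrow> orthogonal_family g w k"
  unfolding orthogonal_family_def by auto

lemma orthogonal_family_extend:
  assumes "sym_bilinear g" "orthogonal_family g w k" "\<And>i. i < k \<Longrightarrow> g (w i) x = 0"
  shows "orthogonal_family g (w(k := x)) (Suc k)"
  using assms sym_bilinear_commute[OF assms(1), of x]
  unfolding orthogonal_family_def by (auto simp: less_Suc_eq)

lemma orthogonal_family_sum_left:
  assumes "sym_bilinear g" "orthogonal_family g w k" "j < k"
  shows "g (\<Sum>i<k. c i *\<^sub>R w i) (w j) = c j * g (w j) (w j)"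
proof -
  have "g (\<Sum>i<k. c i *\<^sub>R w i) (w j) = (\<Sum>i<k. c i * g (w i) (w j))"
    using assms(1) by (simp add: sym_bilinear_simps)
  also have "\<dots> = (\<Sum>i\<in>{j}. c i * g (w i) (w j))"
    by (rule sum.mono_neutral_right) (use assms in \<open>auto simp: orthogonal_family_def\<close>)
  finally show ?thesis by simp
qed

lemma orthogonal_family_sum_quadratic:
  assumes "sym_bilinear g" "orthogonal_family g w k"
  shows "g (\<Sum>i<k. c i *\<^sub>R w i) (\<Sum>i<k. c i *\<^sub>R w i) = (\<Sum>j<k. (c j)\<^sup>2 * g (w j) (w j))"
  using orthogonal_family_sum_left[OF assms]
  by (simp add: sym_bilinear_simps(12,6)[OF assms(1)] power2_eq_square mult.assoc)

lemma orthogonal_family_pos_def_span: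
  assumes "sym_bilinear g" "orthogonal_family g w k" "\<And>i. i < k \<Longrightarrow> g (w i) (w i) > 0"
  shows "pos_def_on g (span (w ` {..<k}))"
  unfolding pos_def_on_def
proof (intro ballI impI)
  fix y assume y: "y \<in> span (w ` {..<k})" "y \<noteq> 0"
  obtain c where c: "y = (\<Sum>i<k. c i *\<^sub>R w i)" using span_image_lessThan_sum[OF y(1)] by blast
  obtain j where j: "j < k" "c j \<noteq> 0"
    using y(2) c by (metis (no_types, lifting) lessThan_iff scale_zero_left sum.neutral)
  have "0 \<le> (c i)\<^sup>2 * g (w i) (w i)" if "i < k" for i
    using assms(3)[OF that] by (simp add: zero_le_mult_iff)
  then have "0 < (\<Sum>j<k. (c j)\<^sup>2 * g (w j) (w j))"
    using j assms(3) by (intro sum_pos2[of "{..<k}" j]) auto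
  then show "g y y > 0" using orthogonal_family_sum_quadratic[OF assms(1,2)] c by simp
qed

lemma orthogonal_family_dim_span:
  assumes "sym_bilinear g" "orthogonal_family g w k" "\<And>i. i < k \<Longrightarrow> g (w i) (w i) \<noteq> 0"
  shows "dim (span (w ` {..<k})) = k"
  using assms(2,3)
proof (induction k)
  case 0
  then show ?case by simp
next
  case (Suc k)
  have "orthogonal_family g w k" using Suc.prems(1) by (auto simp: orthogonal_family_def)
  then have IH: "dim (span (w ` {..<k})) = k" using Suc.IH Suc.prems(2) by auto
  have "w k \<notin> span (w ` {..<k})"
  proof
    assume "w k \<in> span (w ` {..<k})"
    then obtain c where c: "w k = (\<Sum>i<k. c i *\<^sub>R w i)" by (rule span_image_lessThan_sum)
    have "g (w k) (w k) = (\<Sum>i<k. c i * g (w i) (w k))"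
      using assms(1) by (subst (1) c) (simp add: sym_bilinear_simps)
    also have "\<dots> = 0" using Suc.prems(1) by (auto simp: orthogonal_family_def intro!: sum.neutral)
    finally show False using Suc.prems(2)[of k] by simp
  qed
  moreover have "w ` {..<Suc k} = insert (w k) (w ` {..<k})" by (simp add: lessThan_Suc)
  ultimately show ?case using IH by (simp add: dim_insert)
qed

lemma orthogonal_complement_unit_vector:
  assumes g: "sym_bilinear g" and S: "subspace S" and x: "x \<in> S" "g x x = 1"
  shows "subspace {y\<in>S. g x y = 0}" "dim S \<le> Suc (dim {y\<in>S. g x y = 0})"
proof -
  show "subspace {y\<in>S. g x y = 0}"
    using S unfolding subspace_def by (auto simp: sym_bilinear_simps[OF g])
  have "y \<in> span (insert x {y\<in>S. g x y = 0})" if "y \<in> S" for y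
  proof -
    have "y - g x y *\<^sub>R x \<in> {y\<in>S. g x y = 0}"
      using that x S by (auto simp: sym_bilinear_simps[OF g] subspace_diff subspace_scale)
    then have "(y - g x y *\<^sub>R x) + g x y *\<^sub>R x \<in> span (insert x {y\<in>S. g x y = 0})"
      by (intro span_add span_mul span_base) auto
    then show ?thesis by simp
  qed
  then have "dim S \<le> dim (insert x {y\<in>S. g x y = 0})"
    using dim_subset[of S "span (insert x {y\<in>S. g x y = 0})"] by auto
  also have "\<dots> \<le> Suc (dim {y\<in>S. g x y = 0})" by (simp add: dim_insert)
  finally show "dim S \<le> Suc (dim {y\<in>S. g x y = 0})" .
qed

lemma pos_def_orthonormal_family:
  assumes g: "sym_bilinear g" and "subspace S" "pos_def_on g S" "k \<le> dim S"
  obtains w where "\<And>i. i < k \<Longrightarrow> w i \<in> S" "\<And>i. i < k \<Longrightarrow> g (w i) (w i) = 1" "orthogonal_family g w k"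
  using assms(2-4)
proof (induction k arbitrary: S thesis)
  case 0
  then show ?case by (auto simp: orthogonal_family_def)
next
  case (Suc k)
  have "\<not> S \<subseteq> {0}"
  proof
    assume "S \<subseteq> {0}"
    then have "dim S = 0" by simp
    with Suc.prems(4) show False by simp
  qed
  then obtain x where x: "x \<in> S" "x \<noteq> 0" by auto
  then have "g x x > 0" using Suc.prems(3) unfolding pos_def_on_def by auto
  define x0 where "x0 = (1 / sqrt (g x x)) *\<^sub>R x"
  have x0S: "x0 \<in> S" unfolding x0_def using Suc.prems(2) x(1) by (simp add: subspace_scale)
  have x0: "g x0 x0 = 1" unfolding x0_def using \<open>g x x > 0\<close> g
    by (simp add: sym_bilinear_simps power2_eq_square[symmetric] del: real_sqrt_pow2_iff)
  define S' where "S' = {y\<in>S. g x0 y = 0}"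
  note S' = orthogonal_complement_unit_vector[OF g Suc.prems(2) x0S x0, folded S'_def]
  moreover have "pos_def_on g S'" using Suc.prems(3) unfolding pos_def_on_def S'_def by auto
  moreover have "k \<le> dim S'" using S'(2) Suc.prems(4) by simp
  ultimately obtain w where w: "\<And>i. i < k \<Longrightarrow> w i \<in> S'" "\<And>i. i < k \<Longrightarrow> g (w i) (w i) = 1"
    "orthogonal_family g w k"
    using Suc.IH by blast
  show ?case
  proof (rule Suc.prems(1))
    show "(w(k := x0)) i \<in> S" if "i < Suc k" for i
      using that w(1) x0S by (auto simp: S'_def less_Suc_eq)
    show "g ((w(k := x0)) i) ((w(k := x0)) i) = 1" if "i < Suc k" for i
      using that w(2) x0 by (auto simp: less_Suc_eq)
    have "g (w i) x0 = 0" if "i < k" for i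
      using w(1)[OF that] sym_bilinear_commute[OF g, of "w i" x0] by (simp add: S'_def)
    then show "orthogonal_family g (w(k := x0)) (Suc k)"
      by (rule orthogonal_family_extend[OF g w(3)])
  qed
qed

text \<open>The map sending w to w plus its g-components g w (u i) along the u i projects onto the
  g-orthogonal complement of the u i and does not decrease g w w.\<close>
lemma pos_def_subspace_orthogonal_to_timelike:
  assumes g: "sym_bilinear g" and u: "orthogonal_family g u p" "\<And>i. i < p \<Longrightarrow> g (u i) (u i) = -1"
    and W: "subspace W" "pos_def_on g W"
  obtains S where "subspace S" "pos_def_on g S" "dim S = dim W"
    "\<And>x i. x \<in> S \<Longrightarrow> i < p \<Longrightarrow> g (u i) x = 0"
proof -
  define P where "P w = w + (\<Sum>i<p. g w (u i) *\<^sub>R u i)" for w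
  have linP: "linear P"
    by (rule linearI)
      (auto simp: P_def sym_bilinear_simps[OF g] algebra_simps sum.distrib scaleR_sum_right)
  have Pu: "g (P w) (u j) = 0" if "j < p" for w j
    using orthogonal_family_sum_left[OF g u(1) that] u(2)[OF that]
    by (simp add: P_def sym_bilinear_simps[OF g])
  have PP: "g (P w) (P w) = g w w + (\<Sum>i<p. (g w (u i))\<^sup>2)" for w
  proof -
    have "g (P w) (P w) = g (P w) w"
      using Pu by (subst (2) P_def) (simp add: sym_bilinear_simps[OF g])
    also have "\<dots> = g w w + (\<Sum>i<p. (g w (u i))\<^sup>2)"
      by (simp add: P_def sym_bilinear_simps[OF g] power2_eq_square
          sym_bilinear_commute[OF g, of "u _" w])
    finally show ?thesis .
  qed
  have Ppos: "g (P w) (P w) > 0" if "w \<in> W" "w \<noteq> 0" for w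
    using W(2) that PP[of w] sum_nonneg[of "{..<p}" "\<lambda>i. (g w (u i))\<^sup>2"]
    unfolding pos_def_on_def by force
  have "inj_on P W"
  proof (rule inj_onI)
    fix x y assume xy: "x \<in> W" "y \<in> W" "P x = P y"
    have "P (x - y) = 0" using xy(3) linear_diff[OF linP] by simp
    moreover have "x - y \<in> W" using xy W(1) by (simp add: subspace_diff)
    ultimately show "x = y" using Ppos[of "x - y"] by (auto simp: sym_bilinear_simps[OF g])
  qed
  then have "dim (P ` W) = dim W"
    using dim_image_eq[OF linP] W(1) by (simp add: span_eq_iff[THEN iffD2])
  moreover have "pos_def_on g (P ` W)"
    unfolding pos_def_on_def using Ppos linear_0[OF linP] by force
  moreover have "g (u i) x = 0" if "x \<in> P ` W" "i < p" for x i
    using that Pu sym_bilinear_commute[OF g] by force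
  ultimately show thesis using that linear_subspace_image[OF linP W(1)] by blast
qed

definition orthonormal_frame ::
    "('n::finite) form \<Rightarrow> nat \<Rightarrow> nat \<Rightarrow> (nat \<Rightarrow> real^'n) \<Rightarrow> (nat \<Rightarrow> real^'n) \<Rightarrow> bool" where
  "orthonormal_frame g p q u v \<longleftrightarrow>
     orthogonal_family g u p \<and> (\<forall>i<p. g (u i) (u i) = -1) \<and>
     orthogonal_family g v q \<and> (\<forall>j<q. g (v j) (v j) = 1) \<and>
     (\<forall>i<p. \<forall>j<q. g (u i) (v j) = 0)"

lemma orthonormal_frame_exists:
  assumes "inner_product_sig g p q"
  obtains u v where "orthonormal_frame g p q u v"
proof -
  have g: "sym_bilinear g" using assms by (rule inner_product_sig_sym_bilinear)
  obtain U where U: "subspace U" "neg_def_on g U" "dim U = p"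
    using assms unfolding inner_product_sig_def has_signature_def by auto
  obtain W where W: "subspace W" "pos_def_on g W" "dim W = q"
    using assms unfolding inner_product_sig_def has_signature_def by auto
  obtain u where u: "\<And>i. i < p \<Longrightarrow> u i \<in> U" "\<And>i. i < p \<Longrightarrow> - g (u i) (u i) = 1"
    "orthogonal_family (\<lambda>x y. - g x y) u p"
    by (rule pos_def_orthonormal_family[OF sym_bilinear_neg[OF g] U(1), where k = p])
      (use U(2,3) in \<open>auto simp: neg_def_on_iff_pos_def_on_neg\<close>)
  have u': "orthogonal_family g u p" "\<And>i. i < p \<Longrightarrow> g (u i) (u i) = -1"
    using u by (auto simp: orthogonal_family_neg)
  obtain S where S: "subspace S" "pos_def_on g S" "dim S = q" "\<And>x i. x \<in> S \<Longrightarrow> i < p \<Longrightarrow> g (u i) x = 0"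
    using pos_def_subspace_orthogonal_to_timelike[OF g u' W(1,2)] W(3) by metis
  obtain v where v: "\<And>j. j < q \<Longrightarrow> v j \<in> S" "\<And>j. j < q \<Longrightarrow> g (v j) (v j) = 1" "orthogonal_family g v q"
    by (rule pos_def_orthonormal_family[OF g S(1,2), where k = q]) (use S(3) in auto)
  show thesis
    by (rule that) (use u' v S(4) in \<open>auto simp: orthonormal_frame_def\<close>)
qed

definition pair_independent :: "real^('n::finite) \<Rightarrow> real^'n \<Rightarrow> bool" where
  "pair_independent a b \<longleftrightarrow> (\<forall>s t. s *\<^sub>R a + t *\<^sub>R b = 0 \<longrightarrow> s = 0 \<and> t = 0)"

lemma plane_of_sig_iff:
  "plane_of_sig g a b e1 e2 \<longleftrightarrow> pair_independent e1 e2 \<and> has_signature g (span {e1, e2}) a b"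
  unfolding plane_of_sig_def pair_independent_def ..

lemma pair_independent_commute: "pair_independent a b \<Longrightarrow> pair_independent b a"
  unfolding pair_independent_def by (metis add.commute)

lemma pair_independent_nonzero:
  assumes "pair_independent a b"
  shows "a \<noteq> 0" "b \<noteq> 0"
proof -
  have "1 *\<^sub>R a + 0 *\<^sub>R b \<noteq> 0" "0 *\<^sub>R a + 1 *\<^sub>R b \<noteq> 0"
    using assms unfolding pair_independent_def by (metis zero_neq_one)+
  then show "a \<noteq> 0" "b \<noteq> 0" by auto
qed

lemma pair_independent_dim_span:
  assumes "pair_independent a b"
  shows "dim (span {a, b}) = 2"
proof -
  have "a \<notin> span {b}"
  proof
    assume "a \<in> span {b}"
    then obtain t where "a = t *\<^sub>R b" by (auto simp: span_singleton)
    then have "1 *\<^sub>R a + (- t) *\<^sub>R b = 0" by simp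
    then show False using assms unfolding pair_independent_def by fastforce
  qed
  then show ?thesis using pair_independent_nonzero[OF assms] by (simp add: dim_insert)
qed

lemma span_pair_obtain:
  assumes "x \<in> span {a, b}"
  obtains s t where "x = s *\<^sub>R a + t *\<^sub>R b"
proof -
  obtain s where "x - s *\<^sub>R a \<in> span {b}" using assms span_breakdown_eq by blast
  then obtain t where "x - s *\<^sub>R a = t *\<^sub>R b" by (auto simp: span_singleton)
  then show thesis using that by (metis diff_add_cancel add.commute)
qed

lemma span_pair_mem: "s *\<^sub>R a + t *\<^sub>R b \<in> span {a, b}"
  by (intro span_add span_mul span_base) auto

lemma orthogonal_pair_plane:
  assumes g: "sym_bilinear g" and "g e1 e2 = 0" "g e1 e1 \<noteq> 0" "g e2 e2 \<noteq> 0"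
  shows "pair_independent e1 e2" "nondeg_on g (span {e1, e2})"
    "g (s *\<^sub>R e1 + t *\<^sub>R e2) (s *\<^sub>R e1 + t *\<^sub>R e2) = s\<^sup>2 * g e1 e1 + t\<^sup>2 * g e2 e2"
proof -
  have pairing: "g (s *\<^sub>R e1 + t *\<^sub>R e2) e1 = s * g e1 e1"
    "g (s *\<^sub>R e1 + t *\<^sub>R e2) e2 = t * g e2 e2" for s t
    using assms sym_bilinear_commute[OF g, of e2 e1] by (simp_all add: sym_bilinear_simps)
  show "pair_independent e1 e2" unfolding pair_independent_def
  proof (intro allI impI)
    fix s t assume "s *\<^sub>R e1 + t *\<^sub>R e2 = 0"
    then have "s * g e1 e1 = 0" "t * g e2 e2 = 0"
      using pairing[of s t] by (simp_all add: sym_bilinear_simps[OF g])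
    then show "s = 0 \<and> t = 0" using assms by simp
  qed
  show "nondeg_on g (span {e1, e2})" unfolding nondeg_on_def
  proof (intro ballI impI)
    fix x assume "x \<in> span {e1, e2}" and x: "\<forall>y\<in>span {e1, e2}. g x y = 0"
    obtain s t where "x = s *\<^sub>R e1 + t *\<^sub>R e2"
      using \<open>x \<in> span {e1, e2}\<close> by (rule span_pair_obtain)
    moreover have "g x e1 = 0" "g x e2 = 0" using x by (auto intro: span_base)
    ultimately have "s * g e1 e1 = 0" "t * g e2 e2 = 0" using pairing by metis+
    then show "x = 0" using assms \<open>x = s *\<^sub>R e1 + t *\<^sub>R e2\<close> by simp
  qed
  show "g (s *\<^sub>R e1 + t *\<^sub>R e2) (s *\<^sub>R e1 + t *\<^sub>R e2) = s\<^sup>2 * g e1 e1 + t\<^sup>2 * g e2 e2"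
    using pairing by (simp add: sym_bilinear_simps(2,6)[OF g] power2_eq_square)
qed

lemma spacelike_pair_plane:
  assumes g: "sym_bilinear g" and o: "g e1 e2 = 0" and "g e1 e1 = 1" "g e2 e2 = 1"
  shows "plane_of_sig g 0 2 e1 e2"
proof -
  note pair = orthogonal_pair_plane[OF g o, unfolded assms(3,4), OF one_neq_zero one_neq_zero]
  have "pos_def_on g (span {e1, e2})" unfolding pos_def_on_def
  proof (intro ballI impI)
    fix x assume "x \<in> span {e1, e2}" "x \<noteq> 0"
    moreover obtain s t where x: "x = s *\<^sub>R e1 + t *\<^sub>R e2"
      using \<open>x \<in> span {e1, e2}\<close> by (rule span_pair_obtain)
    ultimately have "s\<^sup>2 + t\<^sup>2 > 0" by (auto simp: sum_power2_gt_zero_iff)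
    then show "g x x > 0" using x pair(3) by simp
  qed
  then have "has_signature g (span {e1, e2}) 0 2"
    using pos_def_has_signature[OF subspace_span] pair_independent_dim_span[OF pair(1)] by metis
  then show ?thesis using pair(1) by (simp add: plane_of_sig_iff)
qed

lemma timelike_pair_plane:
  assumes "sym_bilinear g" "g e1 e2 = 0" "g e1 e1 = -1" "g e2 e2 = -1"
  shows "plane_of_sig g 2 0 e1 e2"
proof -
  have "plane_of_sig (\<lambda>x y. - g x y) 0 2 e1 e2"
    by (rule spacelike_pair_plane[OF sym_bilinear_neg[OF assms(1)]]) (use assms(2-4) in simp_all)
  then show ?thesis by (simp add: plane_of_sig_def has_signature_neg)
qed

lemma mixed_pair_plane:
  assumes g: "sym_bilinear g" and o: "g e1 e2 = 0" and e1: "g e1 e1 = -1" and e2: "g e2 e2 = 1"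
  shows "plane_of_sig g 1 1 e1 e2"
proof -
  note pair = orthogonal_pair_plane[OF g o, unfolded e1 e2, OF neg_one_neq_zero one_neq_zero]
  have nz: "e1 \<noteq> 0" "e2 \<noteq> 0" using pair_independent_nonzero[OF pair(1)] .
  have dim1: "dim (span {e}) = 1" if "e \<noteq> 0" for e :: "real^'n"
    using that by (simp add: dim_insert)
  have sub: "span {e1} \<subseteq> span {e1, e2}" "span {e2} \<subseteq> span {e1, e2}" by (simp_all add: span_mono)
  have "neg_def_on g (span {e1})" "pos_def_on g (span {e2})"
    using e1 e2 g by (auto simp: neg_def_on_def pos_def_on_def span_singleton sym_bilinear_simps
        not_square_less_zero zero_less_mult_iff)
  have whole: "span {e1, e2} \<subseteq> U" if "subspace U" "U \<subseteq> span {e1, e2}" "\<not> dim U \<le> 1" for U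
    using dim_eq_span[OF that(2)] pair_independent_dim_span[OF pair(1)] that(1,3)
    by (simp add: span_eq_iff[THEN iffD2])
  have "e1 \<in> U" "e2 \<in> U" if "span {e1, e2} \<subseteq> U" for U
    using that by (auto intro: span_base)
  then have "\<not> neg_def_on g U" "\<not> pos_def_on g U" if "span {e1, e2} \<subseteq> U" for U
    using that nz e1 e2 unfolding neg_def_on_def pos_def_on_def by force+
  have "has_signature g (span {e1, e2}) 1 1"
    unfolding has_signature_def
  proof (intro conjI)
    show "\<exists>U. subspace U \<and> U \<subseteq> span {e1, e2} \<and> neg_def_on g U \<and> dim U = 1"
      using \<open>neg_def_on g (span {e1})\<close> sub dim1[OF nz(1)] by (intro exI[of _ "span {e1}"]) auto
    show "\<exists>U. subspace U \<and> U \<subseteq> span {e1, e2} \<and> pos_def_on g U \<and> dim U = 1"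
      using \<open>pos_def_on g (span {e2})\<close> sub dim1[OF nz(2)] by (intro exI[of _ "span {e2}"]) auto
    show "\<forall>U. subspace U \<and> U \<subseteq> span {e1, e2} \<and> neg_def_on g U \<longrightarrow> dim U \<le> 1"
      using whole \<open>\<And>U. span {e1, e2} \<subseteq> U \<Longrightarrow> \<not> neg_def_on g U\<close> by blast
    show "\<forall>U. subspace U \<and> U \<subseteq> span {e1, e2} \<and> pos_def_on g U \<longrightarrow> dim U \<le> 1"
      using whole \<open>\<And>U. span {e1, e2} \<subseteq> U \<Longrightarrow> \<not> pos_def_on g U\<close> by blast
  qed (use pair(2) in auto)
  then show ?thesis using pair(1) by (simp add: plane_of_sig_iff)
qed

lemma plane_of_sig_gram_nonzero:
  assumes g: "sym_bilinear g" and "plane_of_sig g a b e1 e2"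
  shows "g e1 e1 * g e2 e2 - (g e1 e2)\<^sup>2 \<noteq> 0"
proof
  assume gram: "g e1 e1 * g e2 e2 - (g e1 e2)\<^sup>2 = 0"
  have ind: "pair_independent e1 e2" and nd: "nondeg_on g (span {e1, e2})"
    using assms(2) by (auto simp: plane_of_sig_iff has_signature_def)
  have radical: "x = 0" if "x \<in> span {e1, e2}" "g x e1 = 0" "g x e2 = 0" for x
  proof -
    have "g x y = 0" if y: "y \<in> span {e1, e2}" for y
    proof -
      obtain s t where "y = s *\<^sub>R e1 + t *\<^sub>R e2" using y by (rule span_pair_obtain)
      then show ?thesis using \<open>g x e1 = 0\<close> \<open>g x e2 = 0\<close> by (simp add: sym_bilinear_simps[OF g])
    qed
    then show ?thesis using nd that(1) unfolding nondeg_on_def by blast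
  qed
  define x where "x = g e2 e2 *\<^sub>R e1 + (- g e1 e2) *\<^sub>R e2"
  have "g x e1 = 0" "g x e2 = 0"
    using gram sym_bilinear_commute[OF g, of e2 e1] unfolding x_def
    by (simp_all add: sym_bilinear_simps[OF g] power2_eq_square algebra_simps)
  moreover have "x \<in> span {e1, e2}" unfolding x_def by (rule span_pair_mem)
  ultimately have "x = 0" by (rule radical[rotated])
  then have "g e2 e2 = 0 \<and> - g e1 e2 = 0" using ind unfolding x_def pair_independent_def by blast
  then have "g e2 e2 = 0" "g e1 e2 = 0" by simp_all
  then have "e2 = 0"
    using radical[of e2] sym_bilinear_commute[OF g, of e2 e1] by (simp add: span_base)
  then show False using pair_independent_nonzero[OF ind] by simp
qed

lemma spacelike_plane_pos_def:
  assumes "plane_of_sig g 0 2 e1 e2"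
  shows "pos_def_on g (span {e1, e2})"
proof -
  obtain U where U: "subspace U" "U \<subseteq> span {e1, e2}" "pos_def_on g U" "dim U = 2"
    using assms unfolding plane_of_sig_def has_signature_def by blast
  have "dim (span {e1, e2}) = 2"
    using assms pair_independent_dim_span by (auto simp: plane_of_sig_iff)
  then have "span {e1, e2} \<subseteq> U"
    using dim_eq_span[OF U(2)] U(1,4) by (simp add: span_eq_iff[THEN iffD2])
  then show ?thesis using U(3) unfolding pos_def_on_def by blast
qed

lemma timelike_plane_neg_def:
  assumes "plane_of_sig g 2 0 e1 e2"
  shows "neg_def_on g (span {e1, e2})"
  using spacelike_plane_pos_def[of "\<lambda>x y. - g x y"] assms
  by (simp add: plane_of_sig_def has_signature_neg neg_def_on_iff_pos_def_on_neg)

section \<open>Curvature tensors of isotropic self-adjoint operators\<close>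

definition curv_of_form :: "('n::finite) form \<Rightarrow> real^'n \<Rightarrow> real^'n \<Rightarrow> real^'n \<Rightarrow> real^'n \<Rightarrow> real" where
  "curv_of_form B x y z w = B y z * B x w - B x z * B y w"

lemma alg_curv_tensor_curv_of_form:
  assumes "sym_bilinear B"
  shows "alg_curv_tensor (curv_of_form B)"
  using sym_bilinear_commute[OF assms]
  unfolding alg_curv_tensor_def curv_of_form_def
  by (intro conjI allI linearI) (simp_all add: sym_bilinear_simps[OF assms] algebra_simps)

definition wedge_map :: "('n::finite) form \<Rightarrow> real^'n \<Rightarrow> real^'n \<Rightarrow> real^'n \<Rightarrow> real^'n" where
  "wedge_map g a b z = g b z *\<^sub>R a - g a z *\<^sub>R b"

definition isotropic_pair :: "('n::finite) form \<Rightarrow> real^'n \<Rightarrow> real^'n \<Rightarrow> bool" where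
  "isotropic_pair g a b \<longleftrightarrow> g a a = 0 \<and> g b b = 0 \<and> g a b = 0"

lemma linear_wedge_map: "sym_bilinear g \<Longrightarrow> linear (wedge_map g a b)"
  by (rule linearI) (auto simp: wedge_map_def sym_bilinear_simps algebra_simps)

lemma wedge_map_scaleR_left:
  "sym_bilinear g \<Longrightarrow> (\<lambda>z. c *\<^sub>R wedge_map g a b z) = wedge_map g (c *\<^sub>R a) b"
  by (rule ext) (simp add: wedge_map_def sym_bilinear_simps algebra_simps)

lemma wedge_map_zero_right: "sym_bilinear g \<Longrightarrow> wedge_map g a 0 = (\<lambda>z. 0)"
  by (rule ext) (simp add: wedge_map_def sym_bilinear_simps)

lemma wedge_map_parallel: "sym_bilinear g \<Longrightarrow> wedge_map g (s *\<^sub>R a) (t *\<^sub>R a) = (\<lambda>z. 0)"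
  by (rule ext) (simp add: wedge_map_def sym_bilinear_simps)

lemma wedge_map_square_zero:
  assumes "sym_bilinear g" "isotropic_pair g a b"
  shows "wedge_map g a b (wedge_map g a b z) = 0"
  using assms sym_bilinear_commute[OF assms(1), of b a]
  by (simp add: wedge_map_def isotropic_pair_def sym_bilinear_simps)

lemma nondegenerate_dual_vector:
  assumes g: "sym_bilinear g" and nd: "nondegenerate g" and ind: "pair_independent a b"
  obtains c where "g a c = 1" "g b c = 0"
proof -
  have "\<exists>c. g a c = 1 \<and> g b c = 0"
  proof (rule ccontr)
    assume none: "\<not> (\<exists>c. g a c = 1 \<and> g b c = 0)"
    have ker: "g a z = 0" if "g b z = 0" for z
    proof (rule ccontr)
      assume "g a z \<noteq> 0"
      then have "g a ((1 / g a z) *\<^sub>R z) = 1 \<and> g b ((1 / g a z) *\<^sub>R z) = 0"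
        using that by (simp add: sym_bilinear_simps[OF g])
      then show False using none by blast
    qed
    obtain w where "g b w \<noteq> 0"
      using nd pair_independent_nonzero(2)[OF ind] unfolding nondegenerate_def by blast
    define w1 where "w1 = (1 / g b w) *\<^sub>R w"
    have w1: "g b w1 = 1" using \<open>g b w \<noteq> 0\<close> by (simp add: w1_def sym_bilinear_simps[OF g])
    have "g (a - g a w1 *\<^sub>R b) z = 0" for z
    proof -
      have "g b (z - g b z *\<^sub>R w1) = 0" using w1 by (simp add: sym_bilinear_simps[OF g])
      then have "g a (z - g b z *\<^sub>R w1) = 0" by (rule ker)
      then show ?thesis by (simp add: sym_bilinear_simps[OF g] sym_bilinear_commute[OF g, of b z])
    qed
    then have "a - g a w1 *\<^sub>R b = 0" using nd unfolding nondegenerate_def by blast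
    then have "1 *\<^sub>R a + (- g a w1) *\<^sub>R b = 0" by simp
    then show False using ind unfolding pair_independent_def by (metis one_neq_zero)
  qed
  then show thesis using that by blast
qed

lemma range_wedge_map:
  assumes g: "sym_bilinear g" and "nondegenerate g" "pair_independent a b"
  shows "range (wedge_map g a b) = span {a, b}"
proof
  show "range (wedge_map g a b) \<subseteq> span {a, b}"
  proof clarify
    fix z
    show "wedge_map g a b z \<in> span {a, b}"
      using span_pair_mem[of "g b z" a "- g a z" b] by (simp add: wedge_map_def)
  qed
  obtain c where c: "g a c = 1" "g b c = 0" using nondegenerate_dual_vector[OF assms] .
  obtain d where d: "g b d = 1" "g a d = 0"
    using nondegenerate_dual_vector[OF assms(1,2) pair_independent_commute[OF assms(3)]] .
  have "a = wedge_map g a b d" "b = wedge_map g a b (- c)"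
    using c d by (simp_all add: wedge_map_def sym_bilinear_simps[OF g])
  then have "{a, b} \<subseteq> range (wedge_map g a b)" by blast
  then show "span {a, b} \<subseteq> range (wedge_map g a b)"
    using span_minimal[OF _ linear_subspace_image[OF linear_wedge_map[OF g] subspace_UNIV]] by blast
qed

lemma wedge_map_conjugate:
  assumes g: "sym_bilinear g" and nd: "nondegenerate g"
    and "pair_independent a b" "isotropic_pair g a b"
    and "pair_independent a' b'" "isotropic_pair g a' b'"
  shows "conjugate_maps (wedge_map g a b) (wedge_map g a' b')"
proof (rule square_zero_conjugate)
  show "dim (range (wedge_map g a b)) = dim (range (wedge_map g a' b'))"
    by (simp only: range_wedge_map[OF g nd assms(3)] range_wedge_map[OF g nd assms(5)]
        pair_independent_dim_span[OF assms(3)] pair_independent_dim_span[OF assms(5)])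
qed (use assms(4,6) in \<open>simp_all add: linear_wedge_map[OF g] wedge_map_square_zero[OF g]\<close>)

lemma curv_op_eqI:
  assumes g: "sym_bilinear g" and nd: "nondegenerate g"
    and f: "linear f" "\<And>z w. g (f z) w = R x y z w"
  shows "curv_op g R x y = f"
  unfolding curv_op_def
proof (rule the_equality)
  fix h assume h: "linear h \<and> (\<forall>z w. g (h z) w = R x y z w)"
  show "h = f"
  proof
    fix z
    have "g (h z - f z) w = 0" for w using h f by (simp add: sym_bilinear_simps[OF g])
    then show "h z = f z" using nd unfolding nondegenerate_def by (metis eq_iff_diff_eq_0)
  qed
qed (use f in blast)

definition isotropic_self_adjoint :: "('n::finite) form \<Rightarrow> (real^'n \<Rightarrow> real^'n) \<Rightarrow> bool" where
  "isotropic_self_adjoint g \<phi> \<longleftrightarrow>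
     linear \<phi> \<and> (\<forall>x y. g (\<phi> x) y = g x (\<phi> y)) \<and> (\<forall>x y. g (\<phi> x) (\<phi> y) = 0)"

lemma isotropic_self_adjoint_pair:
  assumes "sym_bilinear g" "isotropic_self_adjoint g \<phi>"
  shows "isotropic_pair g (k *\<^sub>R \<phi> x) (\<phi> y)"
proof -
  have "g (\<phi> x) (\<phi> y) = 0" for x y using assms(2) unfolding isotropic_self_adjoint_def by blast
  then show ?thesis by (simp add: isotropic_pair_def sym_bilinear_simps[OF assms(1)])
qed

lemma sym_bilinear_pullback:
  assumes g: "sym_bilinear g" and lin: "linear \<phi>" and adj: "\<And>x y. g (\<phi> x) y = g x (\<phi> y)"
  shows "sym_bilinear (\<lambda>x y. g (\<phi> x) y)"
proof -
  have "linear (\<lambda>x. g (\<phi> x) y)" for y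
    using linear_compose[OF lin sym_bilinear_linear_left[OF g]] by (simp add: o_def)
  moreover have "linear (g (\<phi> x))" for x using sym_bilinear_linear_right[OF g] .
  moreover have "g (\<phi> x) y = g (\<phi> y) x" for x y
    using adj sym_bilinear_commute[OF g] by metis
  ultimately show ?thesis unfolding sym_bilinear_def bilinear_def by blast
qed

lemma plane_op_curv_of_form:
  assumes g: "sym_bilinear g" and nd: "nondegenerate g" and \<phi>: "isotropic_self_adjoint g \<phi>"
  shows "plane_op g (curv_of_form (\<lambda>x y. g (\<phi> x) y)) e1 e2
    = wedge_map g (\<bar>g e1 e1 * g e2 e2 - (g e1 e2)\<^sup>2\<bar> powr (-1/2) *\<^sub>R \<phi> e1) (\<phi> e2)"
proof -
  have "curv_op g (curv_of_form (\<lambda>x y. g (\<phi> x) y)) e1 e2 = wedge_map g (\<phi> e1) (\<phi> e2)"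
    using \<phi> sym_bilinear_commute[OF g]
    by (intro curv_op_eqI[OF g nd linear_wedge_map[OF g]])
       (auto simp: wedge_map_def curv_of_form_def sym_bilinear_simps[OF g]
         isotropic_self_adjoint_def)
  then show ?thesis unfolding plane_op_def by (simp add: wedge_map_scaleR_left[OF g])
qed

lemma IP_curv_of_form:
  fixes g :: "('n::finite) form"
  assumes g: "sym_bilinear g" and nd: "nondegenerate g" and \<phi>: "isotropic_self_adjoint g \<phi>"
  shows "IP g (curv_of_form (\<lambda>x y. g (\<phi> x) y))"
proof -
  have "order c (char_poly_map (plane_op g (curv_of_form (\<lambda>x y. g (\<phi> x) y)) e1 e2))
      = (if c = 0 then CARD('n) else 0)" for c e1 e2
    unfolding plane_op_curv_of_form[OF assms]
    by (rule char_poly_map_square_zero)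
      (simp_all add: linear_wedge_map[OF g] wedge_map_square_zero[OF g]
        isotropic_self_adjoint_pair[OF g \<phi>])
  then show ?thesis unfolding IP_def same_eigenvalues_def by simp
qed

text \<open>Injectivity of \<phi> on the plane makes R(\<pi>) a square-zero map of rank two, and all of
  these are conjugate.\<close>
lemma jordan_IP_sig_curv_of_form:
  assumes g: "sym_bilinear g" and nd: "nondegenerate g" and \<phi>: "isotropic_self_adjoint g \<phi>"
    and inj: "\<And>e1 e2 x. plane_of_sig g a b e1 e2 \<Longrightarrow> x \<in> span {e1, e2} \<Longrightarrow> \<phi> x = 0 \<Longrightarrow> x = 0"
  shows "jordan_IP_sig a b g (curv_of_form (\<lambda>x y. g (\<phi> x) y))"
proof -
  have lin: "linear \<phi>" using \<phi> by (simp add: isotropic_self_adjoint_def)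
  note iso = isotropic_self_adjoint_pair[OF g \<phi>]
  have ind: "pair_independent (\<bar>g e1 e1 * g e2 e2 - (g e1 e2)\<^sup>2\<bar> powr (-1/2) *\<^sub>R \<phi> e1) (\<phi> e2)"
    if pl: "plane_of_sig g a b e1 e2" for e1 e2
    unfolding pair_independent_def
  proof (intro allI impI)
    define k where "k = \<bar>g e1 e1 * g e2 e2 - (g e1 e2)\<^sup>2\<bar> powr (-1/2)"
    have "k \<noteq> 0" using plane_of_sig_gram_nonzero[OF g pl] by (simp add: k_def)
    fix s t assume "s *\<^sub>R k *\<^sub>R \<phi> e1 + t *\<^sub>R \<phi> e2 = 0"
    then have "\<phi> ((s * k) *\<^sub>R e1 + t *\<^sub>R e2) = 0"
      by (simp add: linear_add[OF lin] linear_scale[OF lin])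
    then have "(s * k) *\<^sub>R e1 + t *\<^sub>R e2 = 0" using inj[OF pl span_pair_mem] by blast
    then have "s * k = 0 \<and> t = 0" using pl unfolding plane_of_sig_def by blast
    then show "s = 0 \<and> t = 0" using \<open>k \<noteq> 0\<close> by simp
  qed
  show ?thesis
    unfolding jordan_IP_sig_def plane_op_curv_of_form[OF assms(1-3)]
    using wedge_map_conjugate[OF g nd ind iso ind iso] by blast
qed

lemma not_jordan_IP_sig:
  assumes "plane_of_sig g a b e1 e2" "plane_of_sig g a b f1 f2"
    and "plane_op g R e1 e2 = (\<lambda>z. 0)" "plane_op g R f1 f2 z \<noteq> 0"
  shows "\<not> jordan_IP_sig a b g R"
proof
  assume "jordan_IP_sig a b g R"
  then have "conjugate_maps (plane_op g R e1 e2) (plane_op g R f1 f2)"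
    using assms(1,2) unfolding jordan_IP_sig_def by blast
  then obtain T where T: "linear T" "bij T" "T \<circ> plane_op g R e1 e2 = plane_op g R f1 f2 \<circ> T"
    unfolding conjugate_maps_def by blast
  obtain y where "T y = z" using T(2) by (metis bij_pointE)
  then have "plane_op g R f1 f2 z = T 0" using fun_cong[OF T(3), of y] assms(3) by simp
  then show False using assms(4) linear_0[OF T(1)] by simp
qed

section \<open>Null frames\<close>

definition dyad_sum :: "('n::finite) form \<Rightarrow> (nat \<Rightarrow> real^'n) \<Rightarrow> nat \<Rightarrow> real^'n \<Rightarrow> real^'n" where
  "dyad_sum g n m x = (\<Sum>i<m. g x (n i) *\<^sub>R n i)"

lemma isotropic_self_adjoint_dyad_sum:
  assumes g: "sym_bilinear g" and iso: "\<And>i j. i < m \<Longrightarrow> j < m \<Longrightarrow> g (n i) (n j) = 0"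
  shows "isotropic_self_adjoint g (dyad_sum g n m)"
  unfolding isotropic_self_adjoint_def
proof (intro conjI allI)
  show "linear (dyad_sum g n m)"
    by (rule linearI)
      (simp_all add: dyad_sum_def sym_bilinear_simps[OF g] algebra_simps sum.distrib
        scaleR_sum_right)
  show "g (dyad_sum g n m x) y = g x (dyad_sum g n m y)" for x y
    by (simp add: dyad_sum_def sym_bilinear_simps[OF g] sym_bilinear_commute[OF g, of y]
        mult.commute)
  show "g (dyad_sum g n m x) (dyad_sum g n m y) = 0" for x y
    using iso by (simp add: dyad_sum_def sym_bilinear_simps[OF g])
qed

lemma orthonormal_frame_neg:
  "orthonormal_frame g p q u v \<Longrightarrow> sym_bilinear g \<Longrightarrow> orthonormal_frame (\<lambda>x y. - g x y) q p v u"
  unfolding orthonormal_frame_def orthogonal_family_neg using sym_bilinear_commute[of g] by auto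

lemma orthonormal_frame_null_pairings:
  assumes g: "sym_bilinear g" and fr: "orthonormal_frame g p q u v" and i: "i < p" "i < q"
  shows "j < q \<Longrightarrow> g (u i + v i) (v j) = (if i = j then 1 else 0)"
    and "j < p \<Longrightarrow> g (u i + v i) (u j) = (if i = j then -1 else 0)"
    and "j < p \<Longrightarrow> j < q \<Longrightarrow> g (u i + v i) (u j + v j) = 0"
  using fr i sym_bilinear_commute[OF g, of "v _" "u _"]
  unfolding orthonormal_frame_def orthogonal_family_def
  by (cases "i = j"; auto simp: sym_bilinear_simps[OF g])+

locale signature_frame =
  fixes g :: "('n::finite) form" and p q :: nat and u v :: "nat \<Rightarrow> real^'n"
  assumes sig: "inner_product_sig g p q" and frame: "orthonormal_frame g p q u v"
begin

lemma sym_bilinear_g: "sym_bilinear g"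
  using sig by (rule inner_product_sig_sym_bilinear)

lemma nondegenerate_g: "nondegenerate g"
  using sig by (rule inner_product_sig_nondegenerate)

lemma frame_products:
  shows "i < p \<Longrightarrow> g (u i) (u i) = -1" "j < q \<Longrightarrow> g (v j) (v j) = 1"
    "i < p \<Longrightarrow> j < p \<Longrightarrow> i \<noteq> j \<Longrightarrow> g (u i) (u j) = 0"
    "i < q \<Longrightarrow> j < q \<Longrightarrow> i \<noteq> j \<Longrightarrow> g (v i) (v j) = 0"
    "i < p \<Longrightarrow> j < q \<Longrightarrow> g (u i) (v j) = 0"
  using frame unfolding orthonormal_frame_def orthogonal_family_def by auto

definition null_op :: "nat \<Rightarrow> real^'n \<Rightarrow> real^'n" where
  "null_op m = dyad_sum g (\<lambda>i. u i + v i) m"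

definition curv :: "nat \<Rightarrow> real^'n \<Rightarrow> real^'n \<Rightarrow> real^'n \<Rightarrow> real^'n \<Rightarrow> real" where
  "curv m = curv_of_form (\<lambda>x y. g (null_op m x) y)"

lemmas null_pairings = orthonormal_frame_null_pairings[OF sym_bilinear_g frame]

lemma isotropic_self_adjoint_null_op:
  assumes "m \<le> p" "m \<le> q"
  shows "isotropic_self_adjoint g (null_op m)"
  unfolding null_op_def using assms null_pairings(3)
  by (intro isotropic_self_adjoint_dyad_sum[OF sym_bilinear_g]) auto

lemma null_op_v:
  assumes "m \<le> p" "m \<le> q" "j < q"
  shows "null_op m (v j) = (if j < m then u j + v j else 0)"
proof -
  have "null_op m (v j) = (\<Sum>i<m. if i = j then u j + v j else 0)"
    unfolding null_op_def dyad_sum_def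
    using assms null_pairings(1) sym_bilinear_commute[OF sym_bilinear_g, of "v j"]
    by (intro sum.cong) auto
  then show ?thesis by simp
qed

lemma null_op_u:
  assumes "m \<le> p" "m \<le> q" "j < p"
  shows "null_op m (u j) = (if j < m then - (u j + v j) else 0)"
proof -
  have "null_op m (u j) = (\<Sum>i<m. if i = j then - (u j + v j) else 0)"
    unfolding null_op_def dyad_sum_def
    using assms null_pairings(2) sym_bilinear_commute[OF sym_bilinear_g, of "u j"]
    by (intro sum.cong) auto
  then show ?thesis by simp
qed

lemma wedge_null_nonzero:
  assumes "i < p" "i < q" "j < p" "j < q" "i \<noteq> j" "s \<noteq> 0" "t \<noteq> 0"
  shows "wedge_map g (s *\<^sub>R (u i + v i)) (t *\<^sub>R (u j + v j)) (v j) \<noteq> 0"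
proof -
  have "g (u i + v i) (v i) = 1" using null_pairings(1)[of i i] assms by simp
  then have "u i + v i \<noteq> 0" by (metis sym_bilinear_simps(7)[OF sym_bilinear_g] zero_neq_one)
  moreover have "wedge_map g (s *\<^sub>R (u i + v i)) (t *\<^sub>R (u j + v j)) (v j) = (t * s) *\<^sub>R (u i + v i)"
    using assms null_pairings(1)[of i j] null_pairings(1)[of j j]
    by (simp add: wedge_map_def sym_bilinear_simps[OF sym_bilinear_g])
  ultimately show ?thesis using assms(6,7) by simp
qed

lemma alg_curv_tensor_curv:
  assumes "m \<le> p" "m \<le> q"
  shows "alg_curv_tensor (curv m)"
  using isotropic_self_adjoint_null_op[OF assms] unfolding curv_def isotropic_self_adjoint_def
  by (intro alg_curv_tensor_curv_of_form sym_bilinear_pullback[OF sym_bilinear_g]) auto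

lemma IP_curv: "m \<le> p \<Longrightarrow> m \<le> q \<Longrightarrow> IP g (curv m)"
  unfolding curv_def
  by (intro IP_curv_of_form[OF sym_bilinear_g nondegenerate_g] isotropic_self_adjoint_null_op)

lemma plane_op_curv_orthonormal:
  assumes "m \<le> p" "m \<le> q" "g e1 e2 = 0" "\<bar>g e1 e1\<bar> = 1" "\<bar>g e2 e2\<bar> = 1"
  shows "plane_op g (curv m) e1 e2 = wedge_map g (null_op m e1) (null_op m e2)"
  using assms(3-5)
  unfolding curv_def
  by (simp add: assms(1,2) abs_mult
      plane_op_curv_of_form[OF sym_bilinear_g nondegenerate_g isotropic_self_adjoint_null_op])

lemma not_spacelike_jordan_IP_curv:
  assumes "2 \<le> m" "m < q" "m \<le> p"
  shows "\<not> spacelike_jordan_IP g (curv m)"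
proof (rule not_jordan_IP_sig)
  show "plane_of_sig g 0 2 (v 0) (v m)" "plane_of_sig g 0 2 (v 0) (v 1)"
    using assms by (auto intro!: spacelike_pair_plane[OF sym_bilinear_g] simp: frame_products)
  show "plane_op g (curv m) (v 0) (v m) = (\<lambda>z. 0)"
    using assms wedge_map_zero_right[OF sym_bilinear_g]
    by (simp add: plane_op_curv_orthonormal frame_products null_op_v)
  show "plane_op g (curv m) (v 0) (v 1) (v 1) \<noteq> 0"
    using assms wedge_null_nonzero[of 0 1 1 1]
    by (simp add: plane_op_curv_orthonormal frame_products null_op_v)
qed

lemma not_timelike_jordan_IP_curv:
  assumes "2 \<le> m" "m < p" "m \<le> q"
  shows "\<not> timelike_jordan_IP g (curv m)"
proof (rule not_jordan_IP_sig)
  show "plane_of_sig g 2 0 (u 0) (u m)" "plane_of_sig g 2 0 (u 0) (u 1)"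
    using assms by (auto intro!: timelike_pair_plane[OF sym_bilinear_g] simp: frame_products)
  show "plane_op g (curv m) (u 0) (u m) = (\<lambda>z. 0)"
    using assms wedge_map_zero_right[OF sym_bilinear_g]
    by (simp add: plane_op_curv_orthonormal frame_products null_op_u)
  show "plane_op g (curv m) (u 0) (u 1) (v 1) \<noteq> 0"
    using assms wedge_null_nonzero[of 0 1 "-1" "-1"]
    by (simp add: plane_op_curv_orthonormal frame_products null_op_u)
qed

lemma not_mixed_jordan_IP_curv:
  assumes "2 \<le> m" "m \<le> p" "m \<le> q"
  shows "\<not> mixed_jordan_IP g (curv m)"
proof (rule not_jordan_IP_sig)
  show "plane_of_sig g 1 1 (u 0) (v 0)" "plane_of_sig g 1 1 (u 0) (v 1)"
    using assms by (intro mixed_pair_plane[OF sym_bilinear_g]; simp add: frame_products)+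
  show "plane_op g (curv m) (u 0) (v 0) = (\<lambda>z. 0)"
    using assms wedge_map_parallel[OF sym_bilinear_g, of "-1" "u 0 + v 0" 1]
    by (simp add: plane_op_curv_orthonormal frame_products null_op_u null_op_v)
  show "plane_op g (curv m) (u 0) (v 1) (v 1) \<noteq> 0"
    using assms wedge_null_nonzero[of 0 1 "-1" 1]
    by (simp add: plane_op_curv_orthonormal frame_products null_op_u null_op_v)
qed

text \<open>Otherwise x and the v j would span a positive definite subspace of dimension q + 1.\<close>
lemma orthogonal_to_spacelike_frame_nonpos:
  assumes "\<And>j. j < q \<Longrightarrow> g x (v j) = 0"
  shows "g x x \<le> 0"
proof (rule ccontr)
  assume "\<not> g x x \<le> 0"
  have "g (v j) x = 0" if "j < q" for j
    using assms[OF that] sym_bilinear_commute[OF sym_bilinear_g] by metis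
  then have orth: "orthogonal_family g (v(q := x)) (Suc q)"
    using frame unfolding orthonormal_frame_def
    by (intro orthogonal_family_extend[OF sym_bilinear_g]) auto
  have pos: "g ((v(q := x)) i) ((v(q := x)) i) > 0" if "i < Suc q" for i
    using that \<open>\<not> g x x \<le> 0\<close> frame_products(2) by (auto simp: less_Suc_eq)
  have "dim (span (v(q := x) ` {..<Suc q})) \<le> q"
    using sig orthogonal_family_pos_def_span[OF sym_bilinear_g orth pos]
    unfolding inner_product_sig_def has_signature_def by blast
  moreover have "dim (span (v(q := x) ` {..<Suc q})) = Suc q"
    using orthogonal_family_dim_span[OF sym_bilinear_g orth] pos by fastforce
  ultimately show False by simp
qed

lemma null_op_kernel_orthogonal:
  assumes "m \<le> p" "m \<le> q" "null_op m x = 0" "j < m"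
  shows "g x (u j + v j) = 0"
proof -
  have "g x (u j + v j) = g x (null_op m (v j))" using assms by (simp add: null_op_v)
  also have "\<dots> = g (null_op m x) (v j)"
    using isotropic_self_adjoint_null_op[OF assms(1,2)]
    unfolding isotropic_self_adjoint_def by metis
  finally show ?thesis using assms(3) by (simp add: sym_bilinear_simps[OF sym_bilinear_g])
qed

text \<open>Correcting x by null vectors makes it orthogonal to all v j without changing g x x.\<close>
lemma null_op_kernel_nonpos:
  assumes "q \<le> p" "null_op q x = 0"
  shows "g x x \<le> 0"
proof -
  note simps = sym_bilinear_simps[OF sym_bilinear_g]
  have gxn: "g x (u j + v j) = 0" if "j < q" for j
    using null_op_kernel_orthogonal[OF assms(1) order.refl assms(2) that] .
  define y where "y = x - (\<Sum>i<q. g x (v i) *\<^sub>R (u i + v i))"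
  have "g y (v j) = 0" if "j < q" for j
  proof -
    have "g y (v j) = g x (v j) - (\<Sum>i<q. g x (v i) * g (u i + v i) (v j))"
      unfolding y_def by (simp only: simps(3,11,5))
    also have "(\<Sum>i<q. g x (v i) * g (u i + v i) (v j)) = (\<Sum>i<q. if i = j then g x (v j) else 0)"
      by (rule sum.cong) (use that assms(1) null_pairings(1) in auto)
    finally show ?thesis using that by simp
  qed
  moreover have "g y y = g x x"
  proof -
    have gyn: "g y (u j + v j) = 0" if "j < q" for j
    proof -
      have "g y (u j + v j) = g x (u j + v j) - (\<Sum>i<q. g x (v i) * g (u i + v i) (u j + v j))"
        unfolding y_def by (simp only: simps(3,11,5))
      then show ?thesis using that assms(1) gxn null_pairings(3) by simp
    qed
    have "g y y = g y x - (\<Sum>i<q. g x (v i) * g y (u i + v i))"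
      by (subst (2) y_def) (simp only: simps(4,12,6))
    also have "\<dots> = g y x" using gyn by simp
    also have "\<dots> = g x x - (\<Sum>i<q. g x (v i) * g (u i + v i) x)"
      unfolding y_def by (simp only: simps(3,11,5))
    also have "\<dots> = g x x"
      using gxn sym_bilinear_commute[OF sym_bilinear_g, of "u _ + v _" x] by simp
    finally show ?thesis .
  qed
  ultimately show ?thesis using orthogonal_to_spacelike_frame_nonpos[of y] by simp
qed

lemma null_op_kernel_nonneg:
  assumes "p \<le> q" "null_op p x = 0"
  shows "0 \<le> g x x"
proof -
  interpret neg: signature_frame "\<lambda>x y. - g x y" q p v u
    using inner_product_sig_neg[OF sig] orthonormal_frame_neg[OF frame sym_bilinear_g]
    by unfold_locales
  have "neg.null_op p x = - null_op p x"
    unfolding neg.null_op_def null_op_def dyad_sum_def by (simp add: add.commute sum_negf)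
  then show ?thesis using neg.null_op_kernel_nonpos[of x] assms by simp
qed

lemma spacelike_jordan_IP_curv:
  assumes "q \<le> p"
  shows "spacelike_jordan_IP g (curv q)"
  unfolding curv_def
proof (rule jordan_IP_sig_curv_of_form[OF sym_bilinear_g nondegenerate_g
      isotropic_self_adjoint_null_op])
  fix e1 e2 x assume "plane_of_sig g 0 2 e1 e2" "x \<in> span {e1, e2}" "null_op q x = 0"
  then show "x = 0"
    using spacelike_plane_pos_def null_op_kernel_nonpos[OF assms] unfolding pos_def_on_def by force
qed (use assms in auto)

lemma timelike_jordan_IP_curv:
  assumes "p \<le> q"
  shows "timelike_jordan_IP g (curv p)"
  unfolding curv_def
proof (rule jordan_IP_sig_curv_of_form[OF sym_bilinear_g nondegenerate_g
      isotropic_self_adjoint_null_op])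
  fix e1 e2 x assume "plane_of_sig g 2 0 e1 e2" "x \<in> span {e1, e2}" "null_op p x = 0"
  then show "x = 0"
    using timelike_plane_neg_def null_op_kernel_nonneg[OF assms] unfolding neg_def_on_def by force
qed (use assms in auto)

end

theorem lemma2p5:
  fixes g :: "real^'n \<Rightarrow> real^'n \<Rightarrow> real" and p q :: nat
  assumes "inner_product_sig g p q" and "p \<ge> 3" and "q \<ge> 3"
  shows "(\<exists>R. alg_curv_tensor R \<and> IP g R \<and> \<not> spacelike_jordan_IP g R
              \<and> \<not> timelike_jordan_IP g R \<and> \<not> mixed_jordan_IP g R)
       \<and> (p = q \<longrightarrow> (\<exists>R. alg_curv_tensor R \<and> spacelike_jordan_IP g R
              \<and> timelike_jordan_IP g R \<and> \<not> mixed_jordan_IP g R))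
       \<and> (p > q \<longrightarrow> (\<exists>R. alg_curv_tensor R \<and> spacelike_jordan_IP g R
              \<and> \<not> timelike_jordan_IP g R \<and> \<not> mixed_jordan_IP g R))"
proof -
  obtain u v where "orthonormal_frame g p q u v"
    using orthonormal_frame_exists[OF assms(1)] by blast
  then interpret signature_frame g p q u v
    using assms(1) by unfold_locales
  have "alg_curv_tensor (curv 2) \<and> IP g (curv 2) \<and> \<not> spacelike_jordan_IP g (curv 2)
      \<and> \<not> timelike_jordan_IP g (curv 2) \<and> \<not> mixed_jordan_IP g (curv 2)"
    using assms(2,3) by (intro conjI alg_curv_tensor_curv IP_curv not_spacelike_jordan_IP_curv
        not_timelike_jordan_IP_curv not_mixed_jordan_IP_curv) auto
  moreover have "alg_curv_tensor (curv q) \<and> spacelike_jordan_IP g (curv q)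
      \<and> timelike_jordan_IP g (curv q) \<and> \<not> mixed_jordan_IP g (curv q)" if "p = q"
    using that assms(3) timelike_jordan_IP_curv
    by (intro conjI alg_curv_tensor_curv spacelike_jordan_IP_curv not_mixed_jordan_IP_curv) auto
  moreover have "alg_curv_tensor (curv q) \<and> spacelike_jordan_IP g (curv q)
      \<and> \<not> timelike_jordan_IP g (curv q) \<and> \<not> mixed_jordan_IP g (curv q)" if "p > q"
    using that assms(3) by (intro conjI alg_curv_tensor_curv spacelike_jordan_IP_curv
        not_timelike_jordan_IP_curv not_mixed_jordan_IP_curv) auto
  ultimately show ?thesis by blast
qed

end
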